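(* Consider a population of users $1,\dots,n$ with intervals $[l_i,r_i]$, speech points $p_i\in[l_i,r_i]$, common disutility $b:=b_1=\dots=b_n\ge0$ and common personalization parameter $\lambda:=\lambda_1=\dots=\lambda_n\in[0,1]$, in which compatibility is mutual: for all $i,j$, $p_j\in[l_i,r_i]$ implies $p_i\in[l_j,r_j]$. Then for any initial set of users on the platform and any starvation-free switching order, the platform reaches an equilibrium: there is a time $T$ after which the set of users on the platform never changes (and this set is stable).
   Context: For $\mathcal S\subseteq[n]$, user $i$'s utility is $u_i(\mathcal S)=\sum_{j\in\mathcal S\setminus\{i\}}\big(\mathbf 1[p_j\in[l_i,r_i]]-\lambda b\,\mathbf 1[p_j\notin[l_i,r_i]]\big)$. The platform (with no moderation) starts from some initial set of users; a switching order $\sigma:\mathbb Z_{>0}\to[n]$ is starvation-free if every user appears at infinitely many times. At time $t$, user $\sigma(t)$ is on the platform after step $t$ iff $u_{\sigma(t)}(\mathcal W)\ge0$, where $\mathcal W$ is the current set of users on the platform; all other users keep their status. A set $\mathcal S$ is stable if $u_i(\mathcal S)\ge0$ for all $i\in\mathcal S$ and $u_j(\mathcal S)<0$ for all $j\notin\mathcal S$. *)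

theory Defs
  imports Complex_Main
begin

text \<open>Users are the natural numbers 0,...,n-1 (standing for 1,...,n).
  Each user i has an interval [l i, r i] and a speech point p i.\<close>

definition utility :: "(nat \<Rightarrow> real) \<Rightarrow> (nat \<Rightarrow> real) \<Rightarrow> (nat \<Rightarrow> real) \<Rightarrow> real \<Rightarrow> real
    \<Rightarrow> nat \<Rightarrow> nat set \<Rightarrow> real" where
  "utility l r p lam b i S =
     (\<Sum>j\<in>S - {i}. (if p j \<in> {l i..r i} then 1 else 0)
                     - lam * b * (if p j \<notin> {l i..r i} then 1 else 0))"

fun dyn :: "(nat \<Rightarrow> real) \<Rightarrow> (nat \<Rightarrow> real) \<Rightarrow> (nat \<Rightarrow> real) \<Rightarrow> real \<Rightarrow> real
    \<Rightarrow> nat set \<Rightarrow> (nat \<Rightarrow> nat) \<Rightarrow> nat \<Rightarrow> nat set" where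
  "dyn l r p lam b S0 \<sigma> 0 = S0"
| "dyn l r p lam b S0 \<sigma> (Suc t) =
     (let W = dyn l r p lam b S0 \<sigma> t; i = \<sigma> (Suc t) in
      if utility l r p lam b i W \<ge> 0 then insert i W else W - {i})"

definition starvation_free :: "nat \<Rightarrow> (nat \<Rightarrow> nat) \<Rightarrow> bool" where
  "starvation_free n \<sigma> \<longleftrightarrow> (\<forall>t>0. \<sigma> t < n) \<and> (\<forall>i<n. infinite {t. t > 0 \<and> \<sigma> t = i})"

definition stable :: "nat \<Rightarrow> (nat \<Rightarrow> real) \<Rightarrow> (nat \<Rightarrow> real) \<Rightarrow> (nat \<Rightarrow> real) \<Rightarrow> real \<Rightarrow> real
    \<Rightarrow> nat set \<Rightarrow> bool" where
  "stable n l r p lam b S \<longleftrightarrow>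
     (\<forall>i\<in>S. utility l r p lam b i S \<ge> 0) \<and>
     (\<forall>j\<in>{..<n} - S. utility l r p lam b j S < 0)"

end

theory Submission
  imports Defs "HOL-Library.Infinite_Set"
begin

text \<open>Mutual compatibility makes the pairwise affinity of two users symmetric, so the dynamics is
  a potential game: the potential \<open>\<Phi>(S) = \<Sum>i\<in>S. u\<^sub>i(S)\<close> changes by \<open>2 u\<^sub>i(S)\<close> when user \<open>i\<close> joins
  and by \<open>-2 u\<^sub>i(S)\<close> when \<open>i\<close> leaves. Hence it never decreases along the dynamics and strictly
  increases whenever a user leaves. Since only finitely many sets occur, eventually nobody leaves;
  from then on the set only grows inside \<open>{..<n}\<close>, so it becomes constant. Starvation-freeness
  lets every user act on the final set, and that it stays unchanged is exactly stability.\<close>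

lemma eventually_const_if_mono_finite_range:
  fixes f :: "nat \<Rightarrow> 'a::order"
  assumes fin: "finite (f ` {T0..})" and mono: "\<And>t. t \<ge> T0 \<Longrightarrow> f t \<le> f (Suc t)"
  shows "\<exists>T\<ge>T0. \<forall>t\<ge>T. f t = f T"
proof -
  obtain T where T: "T \<ge> T0" and maximal: "\<And>t. t \<ge> T0 \<Longrightarrow> f T \<le> f t \<Longrightarrow> f T = f t"
    using finite_has_maximal[OF fin] by auto
  have "f T \<le> f t" if "t \<ge> T" for t
    using that
  proof (induction t rule: dec_induct)
    case (step m)
    then show ?case
      using mono[of m] T by (meson order_trans le_trans)
  qed simp
  then show ?thesis
    using T maximal by (metis order_trans)
qed

lemma eventually_const_if_potential_increases:
  fixes W :: "nat \<Rightarrow> 'a set" and \<Phi> :: "'a set \<Rightarrow> 'b::order"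
  assumes "finite A" and W_sub: "\<And>t. W t \<subseteq> A"
    and \<Phi>_mono: "\<And>t. \<Phi> (W t) \<le> \<Phi> (W (Suc t))"
    and \<Phi>_strict: "\<And>t. \<not> W t \<subseteq> W (Suc t) \<Longrightarrow> \<Phi> (W t) < \<Phi> (W (Suc t))"
  shows "\<exists>T. \<forall>t\<ge>T. W t = W T"
proof -
  have fin_W: "finite (W ` B)" for B
    using finite_subset[of "W ` B" "Pow A"] W_sub \<open>finite A\<close> by auto
  then have "finite ((\<lambda>t. \<Phi> (W t)) ` {0..})"
    by (metis finite_imageI image_image)
  then obtain T0 where "\<forall>t\<ge>T0. \<Phi> (W t) = \<Phi> (W T0)"
    using eventually_const_if_mono_finite_range[of "\<lambda>t. \<Phi> (W t)" 0] \<Phi>_mono by auto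
  then have "W t \<subseteq> W (Suc t)" if "t \<ge> T0" for t
    using that \<Phi>_strict[of t] by (metis le_SucI order.irrefl)
  then show ?thesis
    using eventually_const_if_mono_finite_range[OF fin_W] by blast
qed

definition affinity :: "(nat \<Rightarrow> real) \<Rightarrow> (nat \<Rightarrow> real) \<Rightarrow> (nat \<Rightarrow> real) \<Rightarrow> real \<Rightarrow> real
    \<Rightarrow> nat \<Rightarrow> nat \<Rightarrow> real" where
  "affinity l r p lam b i j = (if p j \<in> {l i..r i} then 1 else - lam * b)"

definition potential :: "(nat \<Rightarrow> real) \<Rightarrow> (nat \<Rightarrow> real) \<Rightarrow> (nat \<Rightarrow> real) \<Rightarrow> real \<Rightarrow> real
    \<Rightarrow> nat set \<Rightarrow> real" where
  "potential l r p lam b S = (\<Sum>i\<in>S. utility l r p lam b i S)"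

definition switch :: "(nat \<Rightarrow> real) \<Rightarrow> (nat \<Rightarrow> real) \<Rightarrow> (nat \<Rightarrow> real) \<Rightarrow> real \<Rightarrow> real
    \<Rightarrow> nat \<Rightarrow> nat set \<Rightarrow> nat set" where
  "switch l r p lam b i W = (if utility l r p lam b i W \<ge> 0 then insert i W else W - {i})"

lemma utility_eq_sum_affinity:
  "utility l r p lam b i S = (\<Sum>j\<in>S - {i}. affinity l r p lam b i j)"
  unfolding utility_def affinity_def by (intro sum.cong) auto

lemma affinity_sym:
  assumes "\<forall>i<n. \<forall>j<n. p j \<in> {l i..r i} \<longrightarrow> p i \<in> {l j..r j}" and "i < n" "j < n"
  shows "affinity l r p lam b i j = affinity l r p lam b j i"
  using assms unfolding affinity_def by metis

lemma utility_insert_self: "utility l r p lam b i (insert i S) = utility l r p lam b i S"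
  unfolding utility_def by simp

lemma utility_insert_other:
  assumes "finite S" "i \<notin> S" "k \<noteq> i"
  shows "utility l r p lam b k (insert i S) = affinity l r p lam b k i + utility l r p lam b k S"
proof -
  have "insert i S - {k} = insert i (S - {k})"
    using assms by auto
  then show ?thesis
    using assms by (simp add: utility_eq_sum_affinity)
qed

lemma potential_insert:
  assumes "finite S" "i \<notin> S"
    and symm: "\<And>j. j \<in> S \<Longrightarrow> affinity l r p lam b j i = affinity l r p lam b i j"
  shows "potential l r p lam b (insert i S) = potential l r p lam b S + 2 * utility l r p lam b i S"
proof -
  let ?u = "utility l r p lam b" and ?a = "affinity l r p lam b"
  have "?u k (insert i S) = ?a i k + ?u k S" if "k \<in> S" for k
    using utility_insert_other[OF assms(1,2)] symm[OF that] that assms(2) by fastforce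
  then have "potential l r p lam b (insert i S) = ?u i S + (\<Sum>k\<in>S. ?a i k + ?u k S)"
    using assms(1,2) by (simp add: potential_def utility_insert_self)
  also have "\<dots> = ?u i S + (\<Sum>k\<in>S. ?a i k) + potential l r p lam b S"
    by (simp add: potential_def sum.distrib)
  also have "(\<Sum>k\<in>S. ?a i k) = ?u i S"
    using \<open>i \<notin> S\<close> by (simp add: utility_eq_sum_affinity)
  finally show ?thesis
    by simp
qed

lemma potential_switch:
  assumes "finite S"
    and symm: "\<And>j. j \<in> S \<Longrightarrow> affinity l r p lam b j i = affinity l r p lam b i j"
  shows "potential l r p lam b S \<le> potential l r p lam b (switch l r p lam b i S)"
    and "\<not> S \<subseteq> switch l r p lam b i S
           \<Longrightarrow> potential l r p lam b S < potential l r p lam b (switch l r p lam b i S)"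
proof -
  let ?P = "potential l r p lam b" and ?u = "utility l r p lam b i S"
  have join: "?P (insert i S) = ?P S + 2 * ?u" if "i \<notin> S"
    using potential_insert[OF \<open>finite S\<close> that symm] .
  have leave: "?P S = ?P (S - {i}) + 2 * ?u" if "i \<in> S"
  proof -
    have "?P (insert i (S - {i})) = ?P (S - {i}) + 2 * utility l r p lam b i (S - {i})"
      by (rule potential_insert) (use \<open>finite S\<close> symm in auto)
    moreover have "insert i (S - {i}) = S"
      using that by blast
    ultimately show ?thesis
      using utility_insert_self[of l r p lam b i "S - {i}"] by simp
  qed
  have "?P S \<le> ?P (switch l r p lam b i S)
    \<and> (\<not> S \<subseteq> switch l r p lam b i S \<longrightarrow> ?P S < ?P (switch l r p lam b i S))"
  proof (cases "0 \<le> ?u")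
    case True
    then have "switch l r p lam b i S = insert i S"
      by (simp add: switch_def)
    then show ?thesis
      using join True by (cases "i \<in> S") (auto simp: insert_absorb)
  next
    case False
    then have "switch l r p lam b i S = S - {i}"
      by (simp add: switch_def)
    moreover have "?P S < ?P (S - {i})" if "i \<in> S"
      using leave[OF that] False by simp
    ultimately show ?thesis
      by (cases "i \<in> S") auto
  qed
  then show "?P S \<le> ?P (switch l r p lam b i S)"
    and "\<not> S \<subseteq> switch l r p lam b i S \<Longrightarrow> ?P S < ?P (switch l r p lam b i S)"
    by auto
qed

lemma stable_iff_switch_fixed:
  assumes "S \<subseteq> {..<n}"
  shows "stable n l r p lam b S \<longleftrightarrow> (\<forall>i<n. switch l r p lam b i S = S)"
  using assms unfolding stable_def switch_def
  by (auto simp: insert_absorb) (metis DiffI lessThan_iff not_le)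

lemma dyn_Suc_switch:
  "dyn l r p lam b S0 \<sigma> (Suc t) = switch l r p lam b (\<sigma> (Suc t)) (dyn l r p lam b S0 \<sigma> t)"
  by (simp add: switch_def Let_def)

lemma starvation_free_recurs:
  assumes "starvation_free n \<sigma>" "i < n"
  shows "\<exists>t>T. \<sigma> t = i"
  using assms unfolding starvation_free_def infinite_nat_iff_unbounded by blast

lemma dyn_subset:
  assumes "S0 \<subseteq> {..<n}" "starvation_free n \<sigma>"
  shows "dyn l r p lam b S0 \<sigma> t \<subseteq> {..<n}"
  using assms by (induction t) (auto simp: starvation_free_def Let_def)

lemma stable_if_dyn_const:
  assumes "starvation_free n \<sigma>" "dyn l r p lam b S0 \<sigma> T \<subseteq> {..<n}"
    and const: "\<forall>t\<ge>T. dyn l r p lam b S0 \<sigma> t = dyn l r p lam b S0 \<sigma> T"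
  shows "stable n l r p lam b (dyn l r p lam b S0 \<sigma> T)"
  unfolding stable_iff_switch_fixed[OF assms(2)]
proof (intro allI impI)
  fix i assume "i < n"
  then obtain t where "t > T" "\<sigma> t = i"
    using starvation_free_recurs[OF assms(1)] by blast
  then obtain s where "t = Suc s" "s \<ge> T"
    by (cases t) auto
  then have "switch l r p lam b i (dyn l r p lam b S0 \<sigma> T)
      = switch l r p lam b (\<sigma> (Suc s)) (dyn l r p lam b S0 \<sigma> s)"
    using const \<open>\<sigma> t = i\<close> by metis
  also have "\<dots> = dyn l r p lam b S0 \<sigma> (Suc s)"
    by (rule dyn_Suc_switch[symmetric])
  also have "\<dots> = dyn l r p lam b S0 \<sigma> T"
    using const \<open>s \<ge> T\<close> le_SucI by blast
  finally show "switch l r p lam b i (dyn l r p lam b S0 \<sigma> T) = dyn l r p lam b S0 \<sigma> T" .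
qed

theorem proposition13:
  fixes n :: nat and l r p :: "nat \<Rightarrow> real" and b lam :: real
    and S0 :: "nat set" and \<sigma> :: "nat \<Rightarrow> nat"
  assumes p_in: "\<forall>i<n. l i \<le> p i \<and> p i \<le> r i"
    and b_nonneg: "b \<ge> 0"
    and lam_range: "0 \<le> lam" "lam \<le> 1"
    and mutual: "\<forall>i<n. \<forall>j<n. p j \<in> {l i..r i} \<longrightarrow> p i \<in> {l j..r j}"
    and init: "S0 \<subseteq> {..<n}"
    and sf: "starvation_free n \<sigma>"
  shows "\<exists>T. (\<forall>t\<ge>T. dyn l r p lam b S0 \<sigma> t = dyn l r p lam b S0 \<sigma> T)
             \<and> stable n l r p lam b (dyn l r p lam b S0 \<sigma> T)"
proof -
  define W where "W = dyn l r p lam b S0 \<sigma>"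
  have W_sub: "W t \<subseteq> {..<n}" for t
    unfolding W_def using dyn_subset[OF init sf] .
  have W_Suc: "W (Suc t) = switch l r p lam b (\<sigma> (Suc t)) (W t)" for t
    unfolding W_def by (rule dyn_Suc_switch)
  have symm: "affinity l r p lam b j (\<sigma> (Suc t)) = affinity l r p lam b (\<sigma> (Suc t)) j"
    if "j \<in> W t" for j t
    using affinity_sym[OF mutual] W_sub that sf unfolding starvation_free_def by blast
  have fin: "finite (W t)" for t
    using W_sub finite_subset by blast
  have potential_mono: "potential l r p lam b (W t) \<le> potential l r p lam b (W (Suc t))" for t
    unfolding W_Suc by (rule potential_switch(1)[OF fin symm])
  have potential_strict:
    "\<not> W t \<subseteq> W (Suc t) \<Longrightarrow> potential l r p lam b (W t) < potential l r p lam b (W (Suc t))" for t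
    unfolding W_Suc by (rule potential_switch(2)[OF fin symm])
  obtain T where "\<forall>t\<ge>T. W t = W T"
    using eventually_const_if_potential_increases[of "{..<n}" W "potential l r p lam b",
        OF _ W_sub potential_mono potential_strict]
    by auto
  then show ?thesis
    using stable_if_dyn_const[OF sf W_sub[of T, unfolded W_def]] unfolding W_def by blast
qed

end
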